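(* For every integer $t>1$ and every integer $d$ with $1\le d\le t$, \[ g\Big(1+\frac{d}{t},t\Big)\ge \frac{(2d+1)t+d^2}{(t+d)(2d+1)}. \]
   Context: Let $\mathbb{F}$ be a finite field and $x_1,\dots,x_p$ a basis of $\mathbb{F}^p$. A $[t\times m,p]$ array code is a $t\times m$ array whose entries (cells) are linear combinations of $x_1,\dots,x_p$; its columns are called servers. It has the $k$-PIR property (is a $[t\times m,p]$ $k$-PIR array code) if for every $i\in\{1,\dots,p\}$ there exist $k$ pairwise disjoint sets $S_1,\dots,S_k$ of columns such that for every $j$ the vector $x_i$ lies in the linear span of all entries of the columns in $S_j$. Its PIR rate is $k/m$. For a rational $s>1$ and a positive integer $t$ with $st$ an integer, $g(s,t)$ is the largest PIR rate $k/m$ of a $[t\times m,st]$ $k$-PIR array code (over all finite fields, all $m$ and all $k$). *)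

theory Defs
  imports "HOL-Algebra.Ring" Complex_Main
begin

text \<open>A finite field is represented as a HOL-Algebra field whose carrier is a set of
naturals (every finite field is isomorphic to such a structure).
A cell of a [t x m, p] array code is a linear combination of x_1..x_p, encoded by its
coefficient vector: A r c l is the coefficient of x_(l+1) in cell (row r, column c),
for r < t, c < m, l < p (0-based indices).\<close>

definition recoverable ::
  "nat ring \<Rightarrow> nat \<Rightarrow> nat \<Rightarrow> (nat \<Rightarrow> nat \<Rightarrow> nat \<Rightarrow> nat) \<Rightarrow> nat set \<Rightarrow> nat \<Rightarrow> bool" where
  "recoverable F t p A S i \<longleftrightarrow>
     (\<exists>lam :: nat \<Rightarrow> nat \<Rightarrow> nat.
        (\<forall>r c. lam r c \<in> carrier F) \<and>
        (\<forall>l<p. (\<Oplus>\<^bsub>F\<^esub> rc \<in> {..<t} \<times> S. lam (fst rc) (snd rc) \<otimes>\<^bsub>F\<^esub> A (fst rc) (snd rc) l)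
               = (if l = i then \<one>\<^bsub>F\<^esub> else \<zero>\<^bsub>F\<^esub>)))"

definition is_PIR_array_code ::
  "nat ring \<Rightarrow> nat \<Rightarrow> nat \<Rightarrow> nat \<Rightarrow> nat \<Rightarrow> (nat \<Rightarrow> nat \<Rightarrow> nat \<Rightarrow> nat) \<Rightarrow> bool" where
  "is_PIR_array_code F t m p k A \<longleftrightarrow>
     (\<forall>r<t. \<forall>c<m. \<forall>l<p. A r c l \<in> carrier F) \<and>
     (\<forall>i<p. \<exists>S :: nat \<Rightarrow> nat set.
        (\<forall>j<k. S j \<subseteq> {..<m}) \<and>
        (\<forall>j<k. \<forall>j'<k. j \<noteq> j' \<longrightarrow> S j \<inter> S j' = {}) \<and>
        (\<forall>j<k. recoverable F t p A (S j) i))"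

definition g :: "real \<Rightarrow> nat \<Rightarrow> real" where
  "g s t = Sup {real k / real m | k m p F A.
      field F \<and> finite (carrier F) \<and> m > 0 \<and> real p = s * real t \<and>
      is_PIR_array_code F t m p k A}"

end

theory Submission
  imports Defs
begin

text \<open>Work over GF(2) with \<open>n = t + d\<close> symbols. For every shift \<open>s < n\<close> and every
\<open>D \<subseteq> {0, \<dots>, 2d - 1}\<close> there is a server covering \<open>s + D\<close> (mod \<open>n\<close>): a plain one, for
\<open>|D| = d\<close>, storing each uncovered symbol in its own cell, and a parity one, for \<open>|D| = d + 1\<close>,
storing the uncovered symbols and the sum of the covered ones; both use exactly \<open>t\<close> cells.
The symbol \<open>x\<^sub>i\<close> is read off alone from every server not covering \<open>i\<close>, and from a plain server
\<open>(s, D)\<close> covering \<open>i = s + q\<close> together with the parity server \<open>(s, ({0, \<dots>, 2d - 1} - D) \<union> {q})\<close>,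
whose sum differs from \<open>x\<^sub>i\<close> exactly by symbols the plain server stores. These recovery sets are
disjoint and miss only parity servers covering \<open>i\<close>; there are at most
\<open>2d \<cdot> C(2d - 1, d) = (d + 1) C(2d, d + 1)\<close> of these among \<open>n (C(2d, d) + C(2d, d + 1))\<close> servers,
which yields the rate.\<close>

section \<open>Array codes over GF(2)\<close>

definition GF2 :: "nat ring" where
  "GF2 = \<lparr>carrier = {0, 1}, mult = (\<lambda>x y. x * y), one = 1, zero = 0,
          add = (\<lambda>x y. (x + y) mod 2)\<rparr>"

lemma GF2_simps [simp]:
  "carrier GF2 = {0, 1}" "x \<otimes>\<^bsub>GF2\<^esub> y = x * y"
  "\<one>\<^bsub>GF2\<^esub> = 1" "\<zero>\<^bsub>GF2\<^esub> = 0" "x \<oplus>\<^bsub>GF2\<^esub> y = (x + y) mod 2"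
  by (simp_all add: GF2_def)

lemma cring_GF2: "cring GF2"
proof (rule cringI)
  show "abelian_group GF2"
    by (rule abelian_groupI) (auto simp: mod_add_left_eq mod_add_right_eq add.assoc add.commute)
  show "comm_monoid GF2"
    by (rule comm_monoidI) auto
qed auto

lemma field_GF2: "field GF2"
proof -
  interpret cring GF2 by (rule cring_GF2)
  show ?thesis by (rule cring_fieldI2) auto
qed

lemma finsum_GF2:
  assumes "finite A" and "\<And>a. a \<in> A \<Longrightarrow> f a \<in> {0, 1}"
  shows "(\<Oplus>\<^bsub>GF2\<^esub> a \<in> A. f a) = (\<Sum>a \<in> A. f a) mod 2"
  using assms
proof (induction A rule: finite_induct)
  case empty
  then show ?case by (simp add: finsum_def finprod_def)
next
  case (insert x A)
  interpret cring GF2 by (rule cring_GF2)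
  have "(\<Oplus>\<^bsub>GF2\<^esub> a \<in> insert x A. f a)
      = f x \<oplus>\<^bsub>GF2\<^esub> (\<Oplus>\<^bsub>GF2\<^esub> a \<in> A. f a)"
    by (rule finsum_insert) (use insert in auto)
  also have "\<dots> = (\<Sum>a \<in> insert x A. f a) mod 2"
    using insert by (simp add: mod_add_right_eq)
  finally show ?case .
qed

lemma recoverable_GF2_by_parity:
  assumes "finite S" and "P \<subseteq> {..<t} \<times> S" and "\<And>r c l. A r c l \<in> {0, 1}"
    and "\<And>l. l < p \<Longrightarrow> card {z \<in> P. A (fst z) (snd z) l = 1} mod 2 = (if l = i then 1 else 0)"
  shows "recoverable GF2 t p A S i"
  unfolding recoverable_def
proof (intro exI[of _ "\<lambda>r c. if (r, c) \<in> P then 1 else 0"] conjI allI impI)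
  fix l assume "l < p"
  have "(\<Oplus>\<^bsub>GF2\<^esub> z \<in> {..<t} \<times> S.
          (if z \<in> P then 1 else 0) \<otimes>\<^bsub>GF2\<^esub> A (fst z) (snd z) l)
      = (\<Sum>z \<in> {..<t} \<times> S. if z \<in> P \<and> A (fst z) (snd z) l = 1 then 1 else 0) mod 2"
    using assms(1,3)
    by (subst finsum_GF2) (auto intro!: arg_cong[where f = "\<lambda>n. n mod 2"] sum.cong, metis)
  also have "(\<Sum>z \<in> {..<t} \<times> S. if z \<in> P \<and> A (fst z) (snd z) l = 1 then 1 else 0)
      = card {z \<in> P. A (fst z) (snd z) l = 1}"
    using assms(1,2) by (simp add: sum.If_cases Int_def) (rule arg_cong[where f = card], blast)
  finally show "(\<Oplus>\<^bsub>GF2\<^esub> z \<in> {..<t} \<times> S.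
          (if (fst z, snd z) \<in> P then 1 else 0) \<otimes>\<^bsub>GF2\<^esub> A (fst z) (snd z) l)
      = (if l = i then \<one>\<^bsub>GF2\<^esub> else \<zero>\<^bsub>GF2\<^esub>)"
    using assms(4) \<open>l < p\<close> by simp
qed auto

section \<open>Binary codes\<close>

text \<open>A binary code stores on server \<open>a\<close> one cell for every \<open>K \<in> cells a\<close>, holding the
sum of the \<open>x\<^sub>l\<close> with \<open>l \<in> K\<close>. Over GF(2), \<open>x\<^sub>i\<close> is the sum of the cells in \<open>Q\<close> when
\<open>i\<close> lies in an odd number of them and every other \<open>l\<close> in an even number.\<close>

definition binary_recoverable ::
  "nat \<Rightarrow> ('a \<Rightarrow> nat set set) \<Rightarrow> 'a set \<Rightarrow> nat \<Rightarrow> bool" where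
  "binary_recoverable p cells S i \<longleftrightarrow> (\<exists>Q \<subseteq> Sigma S cells. finite Q \<and>
     (\<forall>l<p. card {z \<in> Q. l \<in> snd z} mod 2 = (if l = i then 1 else 0)))"

lemma binary_recoverable_singleton:
  assumes "{i} \<in> cells a"
  shows "binary_recoverable p cells {a} i"
  unfolding binary_recoverable_def
proof (intro exI[of _ "{(a, {i})}"] conjI allI impI)
  fix l
  have "{z \<in> {(a, {i})}. l \<in> snd z} = (if l = i then {(a, {i})} else {})"
    by auto
  then show "card {z \<in> {(a, {i})}. l \<in> snd z} mod 2 = (if l = i then 1 else 0)"
    by simp
qed (use assms in auto)

lemma binary_recoverable_by_difference:
  assumes "finite L" and "i \<notin> L" and "u \<noteq> v"
    and "(\<lambda>l. {l}) ` L \<subseteq> cells u" and "insert i L \<in> cells v"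
  shows "binary_recoverable p cells {u, v} i"
  unfolding binary_recoverable_def
proof (intro exI[of _ "(\<lambda>l. (u, {l})) ` L \<union> {(v, insert i L)}"] conjI allI impI)
  fix l
  have "{z \<in> (\<lambda>l. (u, {l})) ` L \<union> {(v, insert i L)}. l \<in> snd z}
      = (if l \<in> L then {(u, {l}), (v, insert i L)} else if l = i then {(v, insert i L)} else {})"
    using assms(2,3) by auto
  then show "card {z \<in> (\<lambda>l. (u, {l})) ` L \<union> {(v, insert i L)}. l \<in> snd z} mod 2
      = (if l = i then 1 else 0)"
    using assms(2,3) by auto
qed (use assms in auto)

lemma bij_betw_cell_positions:
  assumes e: "bij_betw e {..<m} T"
    and cell: "\<And>a. a \<in> T \<Longrightarrow> bij_betw (cell a) {..<card (cells a)} (cells a)"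
  shows "bij_betw (\<lambda>(r, c). (e c, cell (e c) r))
           {(r, c). c < m \<and> r < card (cells (e c))} (Sigma T cells)"
    (is "bij_betw ?pos ?D _")
  unfolding bij_betw_def
proof
  show "inj_on ?pos ?D"
  proof (rule inj_onI)
    fix x y assume "x \<in> ?D" "y \<in> ?D" and eq: "?pos x = ?pos y"
    then obtain r c r' c' where x: "x = (r, c)" "c < m" "r < card (cells (e c))"
      and y: "y = (r', c')" "c' < m" "r' < card (cells (e c'))"
      by auto
    have "c = c'"
      using eq x y inj_onD[OF bij_betw_imp_inj_on[OF e]] by auto
    moreover have "e c \<in> T"
      using bij_betw_apply[OF e] x(2) by simp
    ultimately have "r = r'"
      using eq x y inj_onD[OF bij_betw_imp_inj_on[OF cell]] by auto
    with \<open>c = c'\<close> show "x = y" using x y by simp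
  qed
  show "?pos ` ?D = Sigma T cells"
  proof (intro equalityI subsetI)
    fix z assume "z \<in> ?pos ` ?D"
    then show "z \<in> Sigma T cells"
      using bij_betw_apply[OF e] bij_betw_apply[OF cell] by fastforce
  next
    fix z assume "z \<in> Sigma T cells"
    then obtain a K where z: "z = (a, K)" "a \<in> T" "K \<in> cells a" by auto
    obtain c where c: "c < m" "e c = a" using bij_betw_imp_surj_on[OF e] z(2) by force
    obtain r where r: "r < card (cells a)" "cell a r = K" using bij_betw_imp_surj_on[OF cell] z by force
    show "z \<in> ?pos ` ?D"
      using z c r by (intro image_eqI[of _ _ "(r, c)"]) auto
  qed
qed

lemma recoverable_binary_encoding:
  assumes e: "bij_betw e {..<m} T"
    and cell: "\<And>a. a \<in> T \<Longrightarrow> bij_betw (cell a) {..<card (cells a)} (cells a)"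
    and capacity: "\<And>a. a \<in> T \<Longrightarrow> card (cells a) \<le> t"
    and "S \<subseteq> T" and "binary_recoverable p cells S i"
  shows "recoverable GF2 t p (\<lambda>r c l. if r < card (cells (e c)) \<and> l \<in> cell (e c) r then 1 else 0)
           {c \<in> {..<m}. e c \<in> S} i"
proof -
  define A where "A r c l = (if r < card (cells (e c)) \<and> l \<in> cell (e c) r then 1 else 0 :: nat)"
    for r c l
  define pos where "pos = (\<lambda>(r, c). (e c, cell (e c) r))"
  define D where "D = {(r, c). c < m \<and> r < card (cells (e c))}"
  from assms(5) obtain Q where Q: "Q \<subseteq> Sigma S cells" "finite Q"
    and parity: "\<And>l. l < p \<Longrightarrow> card {z \<in> Q. l \<in> snd z} mod 2 = (if l = i then 1 else 0)"
    unfolding binary_recoverable_def by blast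
  have bij: "bij_betw pos D (Sigma T cells)"
    unfolding pos_def D_def by (rule bij_betw_cell_positions[OF e cell])
  define P where "P = {x \<in> D. pos x \<in> Q}"
  have "Q \<subseteq> Sigma T cells" using Q(1) \<open>S \<subseteq> T\<close> by auto
  have "pos ` P = Q"
  proof
    show "Q \<subseteq> pos ` P"
    proof
      fix z assume "z \<in> Q"
      with \<open>Q \<subseteq> Sigma T cells\<close> obtain x where "x \<in> D" "z = pos x"
        using bij_betw_imp_surj_on[OF bij] by blast
      with \<open>z \<in> Q\<close> show "z \<in> pos ` P" by (auto simp: P_def)
    qed
  qed (auto simp: P_def)
  then have bijP: "bij_betw pos P Q"
    using bij_betw_subset[OF bij] by (auto simp: P_def)
  show ?thesis
    unfolding A_def[symmetric]
  proof (rule recoverable_GF2_by_parity)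
    show "P \<subseteq> {..<t} \<times> {c \<in> {..<m}. e c \<in> S}"
      using Q(1) capacity bij_betwE[OF e] by (fastforce simp: P_def D_def pos_def)
    fix l assume "l < p"
    have "A (fst x) (snd x) l = 1 \<longleftrightarrow> l \<in> snd (pos x)" if "x \<in> P" for x
      using that by (auto simp: A_def P_def D_def pos_def)
    then have "pos ` {x \<in> P. A (fst x) (snd x) l = 1} = {z \<in> Q. l \<in> snd z}"
      using bij_betw_imp_surj_on[OF bijP] by auto
    moreover have "inj_on pos {x \<in> P. A (fst x) (snd x) l = 1}"
      using bij_betw_imp_inj_on[OF bijP] by (rule inj_on_subset) auto
    ultimately have "card {x \<in> P. A (fst x) (snd x) l = 1} = card {z \<in> Q. l \<in> snd z}"
      using card_image by fastforce
    then show "card {x \<in> P. A (fst x) (snd x) l = 1} mod 2 = (if l = i then 1 else 0)"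
      using parity[OF \<open>l < p\<close>] by simp
  qed (auto simp: A_def)
qed

lemma PIR_array_code_of_binary_code:
  assumes "finite T" and capacity: "\<And>a. a \<in> T \<Longrightarrow> finite (cells a) \<and> card (cells a) \<le> t"
    and families: "\<And>i. i < p \<Longrightarrow> \<exists>FF \<subseteq> Pow T. k \<le> card FF \<and> pairwise disjnt FF
                             \<and> (\<forall>S \<in> FF. binary_recoverable p cells S i)"
  shows "\<exists>A. is_PIR_array_code GF2 t (card T) p k A"
proof -
  define m where "m = card T"
  obtain e where e: "bij_betw e {..<m} T"
    using ex_bij_betw_nat_finite[OF \<open>finite T\<close>] by (auto simp: m_def atLeast0LessThan)
  have "\<forall>a \<in> T. \<exists>f. bij_betw f {..<card (cells a)} (cells a)"
    using ex_bij_betw_nat_finite capacity by (auto simp: atLeast0LessThan)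
  then obtain cell where cell: "\<And>a. a \<in> T \<Longrightarrow> bij_betw (cell a) {..<card (cells a)} (cells a)"
    by (metis bchoice)
  define A where "A r c l = (if r < card (cells (e c)) \<and> l \<in> cell (e c) r then 1 else 0 :: nat)"
    for r c l
  have "is_PIR_array_code GF2 t m p k A"
    unfolding is_PIR_array_code_def
  proof (intro conjI allI impI)
    fix i assume "i < p"
    then obtain FF where FF: "FF \<subseteq> Pow T" "k \<le> card FF" "pairwise disjnt FF"
      and rec: "\<And>S. S \<in> FF \<Longrightarrow> binary_recoverable p cells S i"
      using families[OF \<open>i < p\<close>] by blast
    have "finite FF" using FF(1) \<open>finite T\<close> by (meson finite_Pow_iff finite_subset)
    then obtain F where F: "bij_betw F {..<card FF} FF"
      using ex_bij_betw_nat_finite by (auto simp: atLeast0LessThan)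
    have F_in: "F j \<in> FF" if "j < k" for j
      using bij_betw_apply[OF F] that FF(2) by simp
    show "\<exists>S. (\<forall>j<k. S j \<subseteq> {..<m}) \<and>
              (\<forall>j<k. \<forall>j'<k. j \<noteq> j' \<longrightarrow> S j \<inter> S j' = {}) \<and>
              (\<forall>j<k. recoverable GF2 t p A (S j) i)"
    proof (intro exI[of _ "\<lambda>j. {c \<in> {..<m}. e c \<in> F j}"] conjI allI impI)
      fix j j' assume "j < k" "j' < k" "j \<noteq> j'"
      then have "F j \<noteq> F j'"
        using inj_onD[OF bij_betw_imp_inj_on[OF F]] FF(2) by auto
      then have "disjnt (F j) (F j')"
        using FF(3) F_in \<open>j < k\<close> \<open>j' < k\<close> by (auto simp: pairwise_def)
      then show "{c \<in> {..<m}. e c \<in> F j} \<inter> {c \<in> {..<m}. e c \<in> F j'} = {}"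
        by (auto simp: disjnt_def)
    next
      fix j assume "j < k"
      show "recoverable GF2 t p A {c \<in> {..<m}. e c \<in> F j} i"
        unfolding A_def
      proof (rule recoverable_binary_encoding[OF e cell])
        show "F j \<subseteq> T" using F_in[OF \<open>j < k\<close>] FF(1) by blast
        show "binary_recoverable p cells (F j) i" using F_in[OF \<open>j < k\<close>] by (rule rec)
      qed (use capacity in auto)
    qed auto
  qed (simp add: A_def)
  then show ?thesis unfolding m_def by blast
qed

section \<open>Bounding \<open>g\<close> by a single code\<close>

lemma not_recoverable_empty:
  assumes "field F" and "i < p"
  shows "\<not> recoverable F t p A {} i"
proof -
  interpret field F by fact
  show ?thesis
    using assms(2) one_not_zero by (auto simp: recoverable_def)
qed

lemma PIR_array_code_k_le_m:
  assumes "field F" and "0 < p" and "is_PIR_array_code F t m p k A"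
  shows "k \<le> m"
proof -
  have "\<forall>i<p. \<exists>S. (\<forall>j<k. S j \<subseteq> {..<m}) \<and>
                   (\<forall>j<k. \<forall>j'<k. j \<noteq> j' \<longrightarrow> S j \<inter> S j' = {}) \<and>
                   (\<forall>j<k. recoverable F t p A (S j) i)"
    using assms(3) unfolding is_PIR_array_code_def by (rule conjunct2)
  from this[rule_format, OF assms(2)] obtain S where S: "\<And>j. j < k \<Longrightarrow> S j \<subseteq> {..<m}"
    "\<And>j j'. j < k \<Longrightarrow> j' < k \<Longrightarrow> j \<noteq> j' \<Longrightarrow> S j \<inter> S j' = {}"
    "\<And>j. j < k \<Longrightarrow> recoverable F t p A (S j) 0"
    by blast
  have "S j \<noteq> {}" if "j < k" for j
    using S(3)[OF that] not_recoverable_empty[OF assms(1,2)] by auto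
  then have "1 \<le> card (S j)" if "j < k" for j
    using that S(1)[OF that] by (simp add: Suc_le_eq card_gt_0_iff finite_subset)
  then have "k \<le> (\<Sum>j<k. card (S j))"
    using sum_mono[of "{..<k}" "\<lambda>_. 1" "\<lambda>j. card (S j)"] by simp
  also have "\<dots> = card (\<Union>j<k. S j)"
    using S(1,2) by (intro card_UN_disjoint[symmetric]) (auto intro: finite_subset)
  also have "\<dots> \<le> m"
    using S(1) by (intro card_mono[of "{..<m}", simplified]) auto
  finally show ?thesis .
qed

lemma PIR_rate_le_g:
  assumes "field F" and "finite (carrier F)" and "0 < m" and "0 < p" and "real p = s * real t"
    and "is_PIR_array_code F t m p k A"
  shows "real k / real m \<le> g s t"
  unfolding g_def
proof (rule cSup_upper)
  show "real k / real m \<in> {real k / real m | k m p F A. field F \<and> finite (carrier F) \<and> m > 0 \<and>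
          real p = s * real t \<and> is_PIR_array_code F t m p k A}"
    using assms by (intro CollectI exI[of _ k] exI[of _ m] exI[of _ p] exI[of _ F] exI[of _ A]) simp
  show "bdd_above {real k / real m | k m p F A. field F \<and> finite (carrier F) \<and> m > 0 \<and>
          real p = s * real t \<and> is_PIR_array_code F t m p k A}"
  proof (rule bdd_aboveI[of _ 1], clarify)
    fix k' m' p' F' A'
    assume "field F'" "0 < m'" "real p' = s * real t" "is_PIR_array_code F' t m' p' k' A'"
    then have "k' \<le> m'"
      using assms(4,5) by (intro PIR_array_code_k_le_m) auto
    with \<open>0 < m'\<close> show "real k' / real m' \<le> 1" by simp
  qed
qed

section \<open>The construction\<close>

lemma mod_add_left_cancel_less:
  fixes a x y n :: nat
  assumes "(a + x) mod n = (a + y) mod n" and "x < n" and "y < n"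
  shows "x = y"
proof -
  have "x = y" if "(a + x) mod n = (a + y) mod n" "x \<le> y" "y < n" for x y
  proof -
    have "n dvd y - x" using mod_eq_dvd_iff_nat[of "a + x" "a + y" n] that by simp
    then show ?thesis using that nat_dvd_not_less[of "y - x" n] by (cases "x = y") auto
  qed
  from this[of x y] this[of y x] show ?thesis using assms by (cases "x \<le> y") auto
qed

definition rot :: "nat \<Rightarrow> nat \<Rightarrow> nat \<Rightarrow> nat" where
  "rot n s q = (s + q) mod n"

lemma rot_less: "0 < n \<Longrightarrow> rot n s q < n"
  by (simp add: rot_def)

lemma rot_inj_offset: "rot n s q = rot n s q' \<Longrightarrow> q < n \<Longrightarrow> q' < n \<Longrightarrow> q = q'"
  unfolding rot_def by (rule mod_add_left_cancel_less)

lemma rot_inj_shift: "rot n s q = rot n s' q \<Longrightarrow> s < n \<Longrightarrow> s' < n \<Longrightarrow> s = s'"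
  unfolding rot_def by (rule mod_add_left_cancel_less) (simp_all add: add.commute)

lemma inj_on_rot: "w \<le> n \<Longrightarrow> inj_on (rot n s) {..<w}"
  by (intro inj_onI) (erule rot_inj_offset; simp)

lemma card_insert_complement:
  fixes d :: nat
  assumes "D \<subseteq> {..<2 * d}" and "card D = d" and "q \<in> D"
  shows "card (insert q ({..<2 * d} - D)) = d + 1"
  using assms card_Diff_subset[of D "{..<2 * d}"] by (simp add: finite_subset)

lemma central_binomial_identities:
  fixes d :: nat
  assumes "1 \<le> d"
  shows "2 * d * ((2 * d - 1) choose d) = (d + 1) * (2 * d choose (d + 1))"
    and "(d + 1) * (2 * d choose (d + 1)) = d * (2 * d choose d)"
proof -
  show "2 * d * ((2 * d - 1) choose d) = (d + 1) * (2 * d choose (d + 1))"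
    using Suc_times_binomial[of d "2 * d - 1"] assms by (simp add: Suc_diff_1)
  show "(d + 1) * (2 * d choose (d + 1)) = d * (2 * d choose d)"
    using Suc_times_binomial_add[of d "d - 1"] assms by (simp add: Suc_diff_1 mult_2)
qed

context
  fixes t d :: nat
  assumes d_pos: "1 \<le> d" and d_le_t: "d \<le> t"
begin

text \<open>Server \<open>(b, s, D)\<close> covers the symbols \<open>s + D\<close> (mod \<open>t + d\<close>); it is a plain server
(\<open>|D| = d\<close>) for \<open>b = False\<close> and a parity server (\<open>|D| = d + 1\<close>) for \<open>b = True\<close>.\<close>

definition servers :: "(bool \<times> nat \<times> nat set) set" where
  "servers = {(b, s, D). s < t + d \<and> D \<subseteq> {..<2 * d} \<and> card D = (if b then d + 1 else d)}"

definition support :: "bool \<times> nat \<times> nat set \<Rightarrow> nat set" where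
  "support = (\<lambda>(b, s, D). rot (t + d) s ` D)"

definition cells :: "bool \<times> nat \<times> nat set \<Rightarrow> nat set set" where
  "cells a = (\<lambda>l. {l}) ` ({..<t + d} - support a) \<union> (if fst a then {support a} else {})"

definition recovery_pair ::
  "nat \<Rightarrow> nat set \<Rightarrow> nat \<Rightarrow> (bool \<times> nat \<times> nat set) set" where
  "recovery_pair s D q = {(False, s, D), (True, s, insert q ({..<2 * d} - D))}"

definition pair_indices :: "nat \<Rightarrow> (nat \<times> nat set \<times> nat) set" where
  "pair_indices i = {(s, D, q). s < t + d \<and> D \<subseteq> {..<2 * d} \<and> card D = d \<and> q \<in> D
                                \<and> rot (t + d) s q = i}"

definition recovery_sets :: "nat \<Rightarrow> (bool \<times> nat \<times> nat set) set set" where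
  "recovery_sets i = (\<lambda>a. {a}) ` {a \<in> servers. i \<notin> support a}
                     \<union> (\<lambda>(s, D, q). recovery_pair s D q) ` pair_indices i"

lemma finite_servers: "finite servers"
  by (rule finite_subset[of _ "UNIV \<times> {..<t + d} \<times> Pow {..<2 * d}"]) (auto simp: servers_def)

lemma finite_pair_indices: "finite (pair_indices i)"
  by (rule finite_subset[of _ "{..<t + d} \<times> Pow {..<2 * d} \<times> {..<2 * d}"])
    (auto simp: pair_indices_def)

lemma rot_inj_on_window: "inj_on (rot (t + d) s) {..<2 * d}"
  using d_le_t by (intro inj_on_rot) simp

lemma support_subset: "support a \<subseteq> {..<t + d}"
  using d_pos rot_less[of "t + d"] by (auto simp: support_def split: prod.splits)

lemma card_support: "D \<subseteq> {..<2 * d} \<Longrightarrow> card (support (b, s, D)) = card D"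
  unfolding support_def using rot_inj_on_window by (auto intro: card_image inj_on_subset)

lemma card_cells_le: "a \<in> servers \<Longrightarrow> card (cells a) \<le> t"
proof -
  assume "a \<in> servers"
  then obtain b s D where a: "a = (b, s, D)" "D \<subseteq> {..<2 * d}" "card D = (if b then d + 1 else d)"
    by (auto simp: servers_def)
  have "card (cells a) \<le> card ((\<lambda>l. {l}) ` ({..<t + d} - support a)) + (if b then 1 else 0)"
    unfolding cells_def using a(1) by (simp add: card_insert_if)
  also have "\<dots> \<le> t + d - card D + (if b then 1 else 0)"
    using card_Diff_subset[OF finite_subset[OF support_subset] support_subset, of a]
      card_support[OF a(2), of b s] a(1)
    by (simp add: card_image)
  finally show ?thesis using a(3) d_pos d_le_t by (simp split: if_splits)
qed

lemma pair_indicesD: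
  "(s, D, q) \<in> pair_indices i \<Longrightarrow>
     s < t + d \<and> D \<subseteq> {..<2 * d} \<and> card D = d \<and> q \<in> D \<and> rot (t + d) s q = i"
  by (simp add: pair_indices_def)

lemma recovery_pair_subset: "(s, D, q) \<in> pair_indices i \<Longrightarrow> recovery_pair s D q \<subseteq> servers"
  using card_insert_complement by (auto simp: pair_indices_def recovery_pair_def servers_def)

lemma recovery_pair_covers:
  "(s, D, q) \<in> pair_indices i \<Longrightarrow> a \<in> recovery_pair s D q \<Longrightarrow> i \<in> support a"
  by (auto simp: pair_indices_def recovery_pair_def support_def)

lemma recovery_pair_eqD:
  assumes "(s, D, q) \<in> pair_indices i" and "(s', D', q') \<in> pair_indices i"
    and "recovery_pair s D q \<inter> recovery_pair s' D' q' \<noteq> {}"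
  shows "(s, D, q) = (s', D', q')"
proof -
  note P = pair_indicesD[OF assms(1)] and P' = pair_indicesD[OF assms(2)]
  have "s = s'" and complements: "D = D' \<or> insert q ({..<2 * d} - D) = insert q' ({..<2 * d} - D')"
    using assms(3) by (auto simp: recovery_pair_def)
  have "q = q'"
    using P P' \<open>s = s'\<close> inj_onD[OF rot_inj_on_window, of s q q'] by auto
  have "D = D'"
    using complements
  proof
    assume "insert q ({..<2 * d} - D) = insert q' ({..<2 * d} - D')"
    then have "{..<2 * d} - (insert q ({..<2 * d} - D) - {q}) = {..<2 * d} - (insert q ({..<2 * d} - D') - {q})"
      using \<open>q = q'\<close> by simp
    then show "D = D'" using P P' \<open>q = q'\<close> by auto
  qed
  with \<open>s = s'\<close> \<open>q = q'\<close> show ?thesis by simp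
qed

lemma binary_recoverable_recovery_pair:
  assumes "(s, D, q) \<in> pair_indices i"
  shows "binary_recoverable (t + d) cells (recovery_pair s D q) i"
proof -
  note P = pair_indicesD[OF assms]
  define L where "L = rot (t + d) s ` ({..<2 * d} - D)"
  have i_notin: "i \<notin> L"
    using P inj_onD[OF rot_inj_on_window, of s _ q] by (auto simp: L_def)
  have "L \<inter> support (False, s, D) = {}"
    using P inj_onD[OF rot_inj_on_window, of s] by (auto simp: L_def support_def)
  then have "(\<lambda>l. {l}) ` L \<subseteq> cells (False, s, D)"
    using rot_less[of "t + d" s] d_pos by (auto simp: L_def cells_def)
  moreover have "insert i L \<in> cells (True, s, insert q ({..<2 * d} - D))"
    using P by (auto simp: L_def cells_def support_def)
  ultimately show ?thesis
    unfolding recovery_pair_def using i_notin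
    by (intro binary_recoverable_by_difference) (auto simp: L_def)
qed

lemma recovery_setsE:
  assumes "S \<in> recovery_sets i"
  obtains (singleton) a where "a \<in> servers" "i \<notin> support a" "S = {a}"
    | (pair) s D q where "(s, D, q) \<in> pair_indices i" "S = recovery_pair s D q"
  using assms unfolding recovery_sets_def by auto

lemma recovery_sets_subset: "recovery_sets i \<subseteq> Pow servers"
proof
  fix S assume "S \<in> recovery_sets i"
  then show "S \<in> Pow servers"
    by (cases rule: recovery_setsE) (auto dest: recovery_pair_subset)
qed

lemma binary_recoverable_recovery_sets:
  assumes "i < t + d" and "S \<in> recovery_sets i"
  shows "binary_recoverable (t + d) cells S i"
  using assms(2)
proof (cases rule: recovery_setsE)
  case (singleton a)
  then have "{i} \<in> cells a" using assms(1) by (auto simp: cells_def)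
  then show ?thesis unfolding singleton by (rule binary_recoverable_singleton)
next
  case (pair s D q)
  then show ?thesis using binary_recoverable_recovery_pair by simp
qed

lemma pairwise_disjnt_recovery_sets: "pairwise disjnt (recovery_sets i)"
proof (rule pairwiseI)
  fix S S' assume "S \<in> recovery_sets i" "S' \<in> recovery_sets i" "S \<noteq> S'"
  then show "disjnt S S'"
    by (elim recovery_setsE; unfold disjnt_def)
      (auto dest: recovery_pair_covers recovery_pair_eqD)
qed

lemma inj_on_recovery_pair: "inj_on (\<lambda>(s, D, q). recovery_pair s D q) (pair_indices i)"
proof (rule inj_onI)
  fix x y assume "x \<in> pair_indices i" "y \<in> pair_indices i"
    and "(\<lambda>(s, D, q). recovery_pair s D q) x = (\<lambda>(s, D, q). recovery_pair s D q) y"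
  moreover obtain s D q s' D' q' where "x = (s, D, q)" "y = (s', D', q')"
    by (cases x, cases y) auto
  moreover have "recovery_pair s D q \<noteq> {}"
    by (simp add: recovery_pair_def)
  ultimately show "x = y"
    using recovery_pair_eqD[of s D q i s' D' q'] by simp
qed

lemma card_recovery_sets:
  "card (recovery_sets i) = card {a \<in> servers. i \<notin> support a} + card (pair_indices i)"
proof -
  define G where "G = {a \<in> servers. i \<notin> support a}"
  have "(\<lambda>a. {a}) ` G \<inter> (\<lambda>(s, D, q). recovery_pair s D q) ` pair_indices i = {}"
    by (auto simp: recovery_pair_def doubleton_eq_iff)
  then have "card (recovery_sets i)
      = card ((\<lambda>a. {a}) ` G) + card ((\<lambda>(s, D, q). recovery_pair s D q) ` pair_indices i)"
    unfolding recovery_sets_def G_def[symmetric]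
    using finite_servers finite_pair_indices by (intro card_Un_disjoint) (simp_all add: G_def)
  also have "\<dots> = card G + card (pair_indices i)"
    using card_image[OF inj_on_recovery_pair] by (simp add: card_image)
  finally show ?thesis unfolding G_def .
qed

lemma card_plain_covering_le:
  "card {a \<in> servers. \<not> fst a \<and> i \<in> support a} \<le> card (pair_indices i)"
proof -
  have "{a \<in> servers. \<not> fst a \<and> i \<in> support a}
      \<subseteq> (\<lambda>(s, D, q). (False, s, D)) ` pair_indices i"
  proof
    fix a assume "a \<in> {a \<in> servers. \<not> fst a \<and> i \<in> support a}"
    then obtain s D q where "a = (False, s, D)" "(s, D, q) \<in> pair_indices i"
      by (auto simp: servers_def support_def pair_indices_def)
    then show "a \<in> (\<lambda>(s, D, q). (False, s, D)) ` pair_indices i"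
      by (auto intro: rev_image_eqI)
  qed
  then have "card {a \<in> servers. \<not> fst a \<and> i \<in> support a}
      \<le> card ((\<lambda>(s, D, q). (False, s, D)) ` pair_indices i)"
    by (intro card_mono finite_imageI finite_pair_indices)
  also have "\<dots> \<le> card (pair_indices i)"
    by (rule card_image_le[OF finite_pair_indices])
  finally show ?thesis .
qed

lemma card_parity_covering_le:
  "card {a \<in> servers. fst a \<and> i \<in> support a} \<le> 2 * d * ((2 * d - 1) choose d)"
proof -
  define X where "X q = {a \<in> servers. fst a \<and> q \<in> snd (snd a) \<and> rot (t + d) (fst (snd a)) q = i}" for q
  have "{a \<in> servers. fst a \<and> i \<in> support a} \<subseteq> (\<Union>q<2 * d. X q)"
    by (force simp: X_def servers_def support_def)
  then have "card {a \<in> servers. fst a \<and> i \<in> support a} \<le> card (\<Union>q<2 * d. X q)"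
    by (intro card_mono) (auto simp: X_def finite_servers)
  also have "\<dots> \<le> (\<Sum>q<2 * d. card (X q))"
    by (rule card_UN_le) simp
  also have "\<dots> \<le> (\<Sum>q<2 * d. (2 * d - 1) choose d)"
  proof (rule sum_mono)
    fix q assume "q \<in> {..<2 * d}"
    have "inj_on (\<lambda>a. snd (snd a) - {q}) (X q)"
    proof (rule inj_onI)
      fix a a' assume a: "a \<in> X q" and a': "a' \<in> X q"
        and eq: "snd (snd a) - {q} = snd (snd a') - {q}"
      have "rot (t + d) (fst (snd a)) q = rot (t + d) (fst (snd a')) q"
        using a a' by (simp add: X_def)
      then have "fst (snd a) = fst (snd a')"
        by (rule rot_inj_shift) (use a a' in \<open>auto simp: X_def servers_def\<close>)
      moreover have "snd (snd a) = snd (snd a')"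
        using a a' eq by (auto simp: X_def)
      ultimately show "a = a'"
        using a a' by (simp add: X_def prod_eq_iff)
    qed
    moreover have "(\<lambda>a. snd (snd a) - {q}) ` X q \<subseteq> {E. E \<subseteq> {..<2 * d} - {q} \<and> card E = d}"
      by (auto simp: X_def servers_def)
    ultimately have "card (X q) \<le> card {E. E \<subseteq> {..<2 * d} - {q} \<and> card E = d}"
      by (intro card_inj_on_le) (auto intro: finite_subset[of _ "Pow {..<2 * d}"])
    also have "\<dots> = (2 * d - 1) choose d"
      using \<open>q \<in> {..<2 * d}\<close> by (simp add: n_subsets)
    finally show "card (X q) \<le> (2 * d - 1) choose d" .
  qed
  finally show ?thesis by simp
qed

lemma card_servers_le_recovery_sets:
  "card servers \<le> card (recovery_sets i) + 2 * d * ((2 * d - 1) choose d)"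
proof -
  define G where "G = {a \<in> servers. i \<notin> support a}"
  define U where "U = {a \<in> servers. \<not> fst a \<and> i \<in> support a}"
  define X where "X = {a \<in> servers. fst a \<and> i \<in> support a}"
  have "servers = G \<union> U \<union> X"
    by (auto simp: G_def U_def X_def)
  then have "card servers \<le> card G + card U + card X"
    by (metis card_Un_le add_right_mono le_trans)
  then show ?thesis
    using card_recovery_sets[of i] card_plain_covering_le[of i] card_parity_covering_le[of i]
    unfolding G_def U_def X_def by linarith
qed

lemma card_servers: "card servers = (t + d) * ((2 * d choose d) + (2 * d choose (d + 1)))"
proof -
  define servers_of where "servers_of b = {a \<in> servers. fst a = b}" for b
  have "servers_of b
      = Pair b ` ({..<t + d} \<times> {D. D \<subseteq> {..<2 * d} \<and> card D = (if b then d + 1 else d)})"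
    for b
    by (auto simp: servers_of_def servers_def)
  then have card_servers_of: "card (servers_of b) = (t + d) * (2 * d choose (if b then d + 1 else d))"
    for b
    by (simp add: card_image inj_on_def card_cartesian_product n_subsets)
  have split: "servers = servers_of False \<union> servers_of True"
    by (auto simp: servers_of_def)
  have "card servers = card (servers_of False) + card (servers_of True)"
    unfolding split using finite_servers
    by (intro card_Un_disjoint) (auto simp: servers_of_def)
  then show ?thesis
    using card_servers_of[of False] card_servers_of[of True] by (simp add: distrib_left)
qed

lemma PIR_array_code_servers:
  "\<exists>A. is_PIR_array_code GF2 t (card servers) (t + d)
         (card servers - 2 * d * ((2 * d - 1) choose d)) A"
proof (rule PIR_array_code_of_binary_code[OF finite_servers])
  show "finite (cells a) \<and> card (cells a) \<le> t" if "a \<in> servers" for a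
    using card_cells_le[OF that] by (simp add: cells_def)
  fix i assume "i < t + d"
  then show "\<exists>FF \<subseteq> Pow servers. card servers - 2 * d * ((2 * d - 1) choose d) \<le> card FF \<and>
               pairwise disjnt FF \<and> (\<forall>S \<in> FF. binary_recoverable (t + d) cells S i)"
    using recovery_sets_subset pairwise_disjnt_recovery_sets binary_recoverable_recovery_sets
      card_servers_le_recovery_sets[of i]
    by (intro exI[of _ "recovery_sets i"]) auto
qed

text \<open>Both ratios equal \<open>1 - d (d + 1) / ((t + d) (2 d + 1))\<close>.\<close>

lemma rate_servers:
  "real (card servers - 2 * d * ((2 * d - 1) choose d)) / real (card servers)
     = ((2 * real d + 1) * real t + real d ^ 2) / ((real t + real d) * (2 * real d + 1))"
  and card_servers_pos: "0 < card servers"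
proof -
  define C0 where "C0 = 2 * d choose d"
  define C1 where "C1 = 2 * d choose (d + 1)"
  note lost = central_binomial_identities(1)[OF d_pos, folded C1_def]
    and C0_C1 = central_binomial_identities(2)[OF d_pos, folded C0_def C1_def]
  have card: "card servers = (t + d) * (C0 + C1)"
    unfolding card_servers C0_def C1_def ..
  have "0 < C1" using d_pos unfolding C1_def by simp
  then show "0 < card servers" using card d_pos by simp
  have "(d + 1) * C1 \<le> (t + d) * C1"
    using d_pos d_le_t by (intro mult_right_mono) auto
  then have "(d + 1) * C1 \<le> card servers"
    unfolding card by (simp add: add_mult_distrib2)
  then have numerator: "real (card servers - 2 * d * ((2 * d - 1) choose d))
      = (real t + real d) * (real C0 + real C1) - (real d + 1) * real C1"
    unfolding lost card by (simp add: of_nat_diff algebra_simps)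
  have real_card: "real (card servers) = (real t + real d) * (real C0 + real C1)"
    unfolding card by simp
  have "real d * real C0 = (real d + 1) * real C1"
    using C0_C1 by (metis of_nat_Suc of_nat_mult Suc_eq_plus1 add.commute)
  moreover have "((real t + real d) * (real C0 + real C1) - (real d + 1) * real C1)
        * ((real t + real d) * (2 * real d + 1))
      - ((2 * real d + 1) * real t + real d ^ 2) * ((real t + real d) * (real C0 + real C1))
      = (real t + real d) * (real d + 1) * (real d * real C0 - (real d + 1) * real C1)"
    by (simp add: algebra_simps power2_eq_square)
  ultimately have cross: "real (card servers - 2 * d * ((2 * d - 1) choose d))
        * ((real t + real d) * (2 * real d + 1))
      = ((2 * real d + 1) * real t + real d ^ 2) * real (card servers)"
    unfolding numerator real_card by simp
  have "real (card servers) \<noteq> 0" and "(real t + real d) * (2 * real d + 1) \<noteq> 0"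
    using \<open>0 < card servers\<close> d_pos by simp_all
  with cross show "real (card servers - 2 * d * ((2 * d - 1) choose d)) / real (card servers)
     = ((2 * real d + 1) * real t + real d ^ 2) / ((real t + real d) * (2 * real d + 1))"
    by (subst frac_eq_eq) simp_all
qed

end

theorem theorem6:
  fixes t d :: nat
  assumes "t > 1" and "1 \<le> d" and "d \<le> t"
  shows "g (1 + real d / real t) t \<ge>
           ((2 * real d + 1) * real t + real d ^ 2) / ((real t + real d) * (2 * real d + 1))"
proof -
  obtain A where A: "is_PIR_array_code GF2 t (card (servers t d)) (t + d)
                       (card (servers t d) - 2 * d * ((2 * d - 1) choose d)) A"
    using PIR_array_code_servers[OF assms(2,3)] by blast
  have "real (t + d) = (1 + real d / real t) * real t"
    using \<open>t > 1\<close> by (simp add: field_simps)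
  then have "real (card (servers t d) - 2 * d * ((2 * d - 1) choose d)) / real (card (servers t d))
      \<le> g (1 + real d / real t) t"
    using \<open>t > 1\<close> by (intro PIR_rate_le_g[OF field_GF2 _ card_servers_pos[OF assms(2,3)] _ _ A]) auto
  then show ?thesis
    using rate_servers[OF assms(2,3)] by simp
qed

end
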